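(* There is an absolute constant $C$ such that for all $x,u\in\mathbb R$, \[\int_1^\infty|\dot K_t(x,u)|\,dt\le C\,e^{R(x)}.\] Consequently, for every $1\le\rho<\infty$, every $f\in L^1(\gamma_\infty)$ with $\|f\|_{L^1(\gamma_\infty)}=1$ and every $x\in\mathbb R$, $\|H_tf(x)\|_{v(\rho),[1,\infty)}\le C e^{R(x)}$.
   Context: $R(x)=x^2/2$, $d\gamma_\infty(u)=(2\pi)^{-1/2}e^{-R(u)}du$. $K_t(x,u)=\frac{e^{R(x)}}{\sqrt{1-e^{-2t}}}\exp\bigl(-\frac12\frac{(e^{-t}u-x)^2}{1-e^{-2t}}\bigr)$, $\dot K_t=\partial_tK_t$, $H_tf(x)=\int f(u)K_t(x,u)\,d\gamma_\infty(u)$. $\|\phi\|_{v(\rho),I}=\sup(\sum_{i=1}^n|\phi(t_i)-\phi(t_{i-1})|^\rho)^{1/\rho}$ over finite increasing sequences in $I$, taken here in the variable $t$. *)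

theory Defs
  imports "HOL-Analysis.Analysis"
begin

definition R :: "real \<Rightarrow> real" where
  "R x = x\<^sup>2 / 2"

definition gamma_inf :: "real measure" where
  "gamma_inf = density lborel (\<lambda>u. ennreal ((2 * pi) powr (-1/2) * exp (- R u)))"

definition K :: "real \<Rightarrow> real \<Rightarrow> real \<Rightarrow> real" where
  "K t x u = exp (R x) / sqrt (1 - exp (-2*t)) *
     exp (- (1/2) * (exp (-t) * u - x)\<^sup>2 / (1 - exp (-2*t)))"

definition Kdot :: "real \<Rightarrow> real \<Rightarrow> real \<Rightarrow> real" where
  "Kdot t x u = deriv (\<lambda>s. K s x u) t"

definition H :: "real \<Rightarrow> (real \<Rightarrow> real) \<Rightarrow> real \<Rightarrow> real" where
  "H t f x = (\<integral>u. f u * K t x u \<partial>gamma_inf)"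

definition var_norm :: "real \<Rightarrow> real set \<Rightarrow> (real \<Rightarrow> real) \<Rightarrow> ereal" where
  "var_norm \<rho> I \<phi> = (SUP p \<in> {(n, t). (\<forall>i\<le>n. t i \<in> I) \<and> (\<forall>i<n. t i < t (Suc i))}.
      ereal ((\<Sum>i=1..fst p. \<bar>\<phi> (snd p i) - \<phi> (snd p (i - 1))\<bar> powr \<rho>) powr (1 / \<rho>)))"

end

theory Submission
  imports Defs
begin

text \<open>Write K t x u = e^R(x) a(t) b(t) with a(t) = (1 - e^-2t)^(-1/2) and
  b(t) = exp(-(e^-t u - x)^2 / (2(1 - e^-2t))). On [1,\<infinity>) we have 0 \<le> a \<le> 2 and 0 < b \<le> 1;
  a is monotone, and b' is a nonnegative weight times (e^-t u - x)(u - e^-t x), whose two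
  factors are affine in e^-t and so change sign at most once each. Hence b is monotone on at
  most three intervals, the integrals of |a'| and |b'| over [1,\<infinity>) are at most 2 and 3, and
  |K'| \<le> e^R(x) (|a'| + 2|b'|) gives the first claim with C = 8. The same integral bounds the
  total variation of t \<mapsto> K t x u on [1,\<infinity>) uniformly in u; integrating against |f| bounds
  the total variation of t \<mapsto> H t f x, and the total variation dominates every \<rho>-variation
  because the \<ell>^\<rho> norm of a finite sequence is at most its \<ell>^1 norm.\<close>

section \<open>Integrals of absolute derivatives\<close>

definition constant_sign_on :: "real set \<Rightarrow> (real \<Rightarrow> real) \<Rightarrow> bool" where
  "constant_sign_on S g \<longleftrightarrow> (\<forall>t\<in>S. g t \<ge> 0) \<or> (\<forall>t\<in>S. g t \<le> 0)"

lemma constant_sign_on_subset: "constant_sign_on S g \<Longrightarrow> T \<subseteq> S \<Longrightarrow> constant_sign_on T g"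
  unfolding constant_sign_on_def by blast

lemma constant_sign_on_mult:
  "constant_sign_on S f \<Longrightarrow> constant_sign_on S g \<Longrightarrow> constant_sign_on S (\<lambda>t. f t * g t)"
  unfolding constant_sign_on_def
  by (auto intro: mult_nonneg_nonneg mult_nonpos_nonpos mult_nonneg_nonpos mult_nonpos_nonneg)

lemma constant_sign_on_nonneg_mult:
  "(\<And>t. t \<in> S \<Longrightarrow> w t \<ge> 0) \<Longrightarrow> constant_sign_on S g \<Longrightarrow> constant_sign_on S (\<lambda>t. w t * g t)"
  by (rule constant_sign_on_mult) (auto simp: constant_sign_on_def)

lemma constant_sign_on_affine_exp_split:
  "\<exists>m. constant_sign_on {..m} (\<lambda>t. \<alpha> * exp (-t) + \<beta>) \<and> constant_sign_on {m..} (\<lambda>t. \<alpha> * exp (-t) + \<beta>)"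
proof (cases "\<alpha> = 0")
  case True
  then show ?thesis unfolding constant_sign_on_def by (cases "\<beta> \<ge> 0") auto
next
  case False
  have factor: "\<alpha> * exp (-t) + \<beta> = \<alpha> * (exp (-t) - (-\<beta>/\<alpha>))" for t
    using False by (simp add: field_simps)
  have sign_alpha: "(\<forall>t\<in>S. \<alpha> * g t \<ge> 0) \<or> (\<forall>t\<in>S. \<alpha> * g t \<le> 0)"
    if "(\<forall>t\<in>S. g t \<ge> 0) \<or> (\<forall>t\<in>S. g t \<le> 0)" for S and g :: "real \<Rightarrow> real"
    using that by (cases "\<alpha> \<ge> 0")
      (auto intro: mult_nonneg_nonneg mult_nonneg_nonpos mult_nonpos_nonneg mult_nonpos_nonpos)
  show ?thesis
  proof (cases "-\<beta>/\<alpha> > 0")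
    case True
    define m where "m = - ln (-\<beta>/\<alpha>)"
    have exp_m: "exp (-m) = -\<beta>/\<alpha>" unfolding m_def using True by simp
    have "\<forall>t\<in>{..m}. exp (-t) - (-\<beta>/\<alpha>) \<ge> 0" "\<forall>t\<in>{m..}. exp (-t) - (-\<beta>/\<alpha>) \<le> 0"
      unfolding exp_m[symmetric] by auto
    then show ?thesis unfolding constant_sign_on_def factor by (intro exI[of _ m] conjI sign_alpha) auto
  next
    case False
    then have "\<forall>t\<in>S. exp (-t) - (-\<beta>/\<alpha>) \<ge> 0" for S
      by (smt (verit) exp_gt_zero)
    then show ?thesis unfolding constant_sign_on_def factor by (intro exI[of _ 0] conjI sign_alpha) auto
  qed
qed

lemma has_integral_real_derivative:
  assumes "c \<le> d" "\<And>t. t \<in> {c..d} \<Longrightarrow> (\<phi> has_real_derivative \<psi> t) (at t)"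
  shows "(\<psi> has_integral (\<phi> d - \<phi> c)) {c..d}"
  using assms(2)
  by (intro fundamental_theorem_of_calculus[OF assms(1)])
    (simp add: has_real_derivative_iff_has_vector_derivative[symmetric] has_field_derivative_at_within)

lemma nn_integral_abs_deriv_constant_sign:
  assumes "c \<le> d" "\<And>t. t \<in> {c..d} \<Longrightarrow> (\<phi> has_real_derivative \<psi> t) (at t)"
    and "constant_sign_on {c..d} \<psi>"
  shows "(\<integral>\<^sup>+t. ennreal \<bar>\<psi> t\<bar> * indicator {c..d} t \<partial>lborel) = ennreal \<bar>\<phi> d - \<phi> c\<bar>"
proof -
  have int: "(\<psi> has_integral (\<phi> d - \<phi> c)) {c..d}" by (rule has_integral_real_derivative[OF assms(1,2)])
  from assms(3) consider "\<forall>t\<in>{c..d}. \<psi> t \<ge> 0" | "\<forall>t\<in>{c..d}. \<psi> t \<le> 0"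
    unfolding constant_sign_on_def by blast
  then show ?thesis
  proof cases
    case 1
    have abs_int: "((\<lambda>t. \<bar>\<psi> t\<bar>) has_integral (\<phi> d - \<phi> c)) {c..d}"
      using int 1 by (subst has_integral_cong[where g=\<psi>]) auto
    have "\<phi> d - \<phi> c \<ge> 0" using has_integral_nonneg[OF int] 1 by auto
    then show ?thesis using nn_integral_has_integral_lebesgue'[OF _ abs_int] by simp
  next
    case 2
    have abs_int: "((\<lambda>t. \<bar>\<psi> t\<bar>) has_integral -(\<phi> d - \<phi> c)) {c..d}"
      using has_integral_neg[OF int] 2 by (subst has_integral_cong[where g="\<lambda>t. - \<psi> t"]) auto
    have "-(\<phi> d - \<phi> c) \<ge> 0" using has_integral_nonneg[OF abs_int] by auto
    then show ?thesis using nn_integral_has_integral_lebesgue'[OF _ abs_int] by simp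
  qed
qed

lemma abs_diff_le_nn_integral_abs_deriv:
  assumes "c \<le> d" "\<And>t. t \<in> {c..d} \<Longrightarrow> (\<phi> has_real_derivative \<psi> t) (at t)"
    and "continuous_on {c..d} \<psi>"
  shows "ennreal \<bar>\<phi> d - \<phi> c\<bar> \<le> (\<integral>\<^sup>+t. ennreal \<bar>\<psi> t\<bar> * indicator {c..d} t \<partial>lborel)"
proof -
  have int: "(\<psi> has_integral (\<phi> d - \<phi> c)) {c..d}" by (rule has_integral_real_derivative[OF assms(1,2)])
  have abs_integrable: "(\<lambda>t. \<bar>\<psi> t\<bar>) integrable_on {c..d}"
    by (rule integrable_continuous_interval) (intro continuous_intros assms(3))
  have "\<bar>\<phi> d - \<phi> c\<bar> = norm (integral {c..d} \<psi>)" using int by (simp add: integral_unique)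
  also have "\<dots> \<le> integral {c..d} (\<lambda>t. \<bar>\<psi> t\<bar>)"
    by (rule integral_norm_bound_integral) (use int abs_integrable in auto)
  also have "ennreal \<dots> = (\<integral>\<^sup>+t. ennreal \<bar>\<psi> t\<bar> * indicator {c..d} t \<partial>lborel)"
    by (rule nn_integral_has_integral_lebesgue'[symmetric]) (use abs_integrable in auto)
  finally show ?thesis by (simp add: ennreal_leI)
qed

lemma borel_measurable_abs_indicator_Ici:
  fixes c :: real
  assumes "continuous_on {c..} h"
  shows "(\<lambda>t. ennreal \<bar>h t\<bar> * indicator {c..} t) \<in> borel_measurable borel"
proof -
  have "(\<lambda>t. indicator {c..} t *\<^sub>R \<bar>h t\<bar>) \<in> borel_measurable borel"
    by (rule borel_measurable_continuous_on_indicator) (auto intro!: continuous_intros assms)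
  then have "(\<lambda>t. ennreal (indicator {c..} t *\<^sub>R \<bar>h t\<bar>)) \<in> borel_measurable borel"
    by (rule measurable_compose[OF _ measurable_ennreal])
  moreover have "(\<lambda>t. ennreal (indicator {c..} t *\<^sub>R \<bar>h t\<bar>)) = (\<lambda>t. ennreal \<bar>h t\<bar> * indicator {c..} t)"
    by (auto split: split_indicator)
  ultimately show ?thesis by metis
qed

lemma nn_integral_Ici_le_if_truncations_le:
  fixes c :: real
  assumes "continuous_on {c..} h"
    and truncated: "\<And>T. T \<ge> c \<Longrightarrow> (\<integral>\<^sup>+t. ennreal \<bar>h t\<bar> * indicator {c..T} t \<partial>lborel) \<le> M"
  shows "(\<integral>\<^sup>+t. ennreal \<bar>h t\<bar> * indicator {c..} t \<partial>lborel) \<le> M"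
proof -
  define F where "F n t = ennreal \<bar>h t\<bar> * indicator {c..c + real n} t" for n t
  have "incseq F"
    unfolding incseq_def F_def le_fun_def by (auto intro!: mult_left_mono split: split_indicator)
  have F_sup: "(SUP n. F n t) = ennreal \<bar>h t\<bar> * indicator {c..} t" for t
  proof (cases "t \<ge> c")
    case True
    have "F (nat \<lceil>t - c\<rceil>) t = ennreal \<bar>h t\<bar>"
      unfolding F_def using True by (auto split: split_indicator) linarith
    then have "ennreal \<bar>h t\<bar> \<le> (SUP n. F n t)" by (metis UNIV_I SUP_upper)
    moreover have "(SUP n. F n t) \<le> ennreal \<bar>h t\<bar>"
      by (rule SUP_least) (auto simp: F_def split: split_indicator)
    ultimately show ?thesis using True by (auto intro: antisym)
  qed (simp add: F_def)
  have F_eq: "F n = (\<lambda>t. (ennreal \<bar>h t\<bar> * indicator {c..} t) * indicator {c..c + real n} t)" for n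
    by (auto simp: F_def split: split_indicator)
  have "F n \<in> borel_measurable lborel" for n
    unfolding F_eq using borel_measurable_abs_indicator_Ici[OF assms(1)] by simp
  then have "(\<integral>\<^sup>+t. ennreal \<bar>h t\<bar> * indicator {c..} t \<partial>lborel) = (SUP n. integral\<^sup>N lborel (F n))"
    using nn_integral_monotone_convergence_SUP[OF \<open>incseq F\<close>] by (simp add: F_sup)
  also have "\<dots> \<le> M"
    by (rule SUP_least) (unfold F_def, rule truncated, simp)
  finally show ?thesis .
qed

lemma increasing_seq_ge_first: "(\<forall>i<n. (t::nat\<Rightarrow>real) i < t (Suc i)) \<Longrightarrow> m \<le> n \<Longrightarrow> t 0 \<le> t m"
proof (induction m)
  case (Suc m)
  then show ?case by (metis Suc_le_lessD less_imp_le_nat order.strict_implies_order order_trans)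
qed simp

lemma nn_integral_indicator_Icc_eq_Ico:
  fixes c d :: real
  shows "(\<integral>\<^sup>+s. g s * indicator {c..d} s \<partial>lborel) = (\<integral>\<^sup>+s. g s * indicator {c..<d} s \<partial>lborel)"
proof (rule nn_integral_cong_AE)
  show "AE s in lborel. g s * indicator {c..d} s = g s * indicator {c..<d} s"
    using AE_lborel_singleton[of d] by eventually_elim (auto simp: indicator_def)
qed

lemma variation_sum_le_nn_integral_abs_deriv:
  assumes deriv: "\<And>s. s \<ge> c \<Longrightarrow> (\<phi> has_real_derivative \<psi> s) (at s)"
    and cont: "continuous_on {c..} \<psi>"
    and "\<forall>i\<le>n. t i \<ge> c" and "\<forall>i<n. t i < t (Suc i)"
  shows "ennreal (\<Sum>i=1..n. \<bar>\<phi> (t i) - \<phi> (t (i-1))\<bar>)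
           \<le> (\<integral>\<^sup>+s. ennreal \<bar>\<psi> s\<bar> * indicator {t 0..<t n} s \<partial>lborel)"
  using assms(3,4)
proof (induction n)
  case (Suc n)
  let ?g = "\<lambda>s. ennreal \<bar>\<psi> s\<bar>"
  have IH: "ennreal (\<Sum>i=1..n. \<bar>\<phi> (t i) - \<phi> (t (i-1))\<bar>) \<le> (\<integral>\<^sup>+s. ?g s * indicator {t 0..<t n} s \<partial>lborel)"
    using Suc by auto
  have "t 0 \<le> t n" using increasing_seq_ge_first[of "Suc n" t n] Suc.prems by auto
  have "t n < t (Suc n)" "c \<le> t 0" "c \<le> t n" using Suc.prems by auto
  have last_step: "ennreal \<bar>\<phi> (t (Suc n)) - \<phi> (t n)\<bar> \<le> (\<integral>\<^sup>+s. ?g s * indicator {t n..<t (Suc n)} s \<partial>lborel)"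
    unfolding nn_integral_indicator_Icc_eq_Ico[symmetric]
    by (rule abs_diff_le_nn_integral_abs_deriv)
      (use \<open>t n < t (Suc n)\<close> \<open>c \<le> t n\<close> deriv in \<open>auto intro: continuous_on_subset[OF cont]\<close>)
  have measurable: "(\<lambda>s. ?g s * indicator {a..<b} s) \<in> borel_measurable lborel" if "c \<le> a" for a b
  proof -
    have "(\<lambda>s. ?g s * indicator {a..<b} s) = (\<lambda>s. (?g s * indicator {c..} s) * indicator {a..<b} s)"
      using that by (intro ext) (auto simp: indicator_def)
    then show ?thesis using borel_measurable_abs_indicator_Ici[OF cont] by simp
  qed
  have "ennreal (\<Sum>i=1..Suc n. \<bar>\<phi> (t i) - \<phi> (t (i-1))\<bar>)
      = ennreal (\<Sum>i=1..n. \<bar>\<phi> (t i) - \<phi> (t (i-1))\<bar>) + ennreal \<bar>\<phi> (t (Suc n)) - \<phi> (t n)\<bar>"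
    by (simp add: ennreal_plus sum_nonneg)
  also have "\<dots> \<le> (\<integral>\<^sup>+s. ?g s * indicator {t 0..<t n} s \<partial>lborel) + (\<integral>\<^sup>+s. ?g s * indicator {t n..<t (Suc n)} s \<partial>lborel)"
    by (rule add_mono[OF IH last_step])
  also have "\<dots> = (\<integral>\<^sup>+s. ?g s * indicator {t 0..<t n} s + ?g s * indicator {t n..<t (Suc n)} s \<partial>lborel)"
    by (rule nn_integral_add[symmetric]) (use measurable \<open>c \<le> t 0\<close> \<open>c \<le> t n\<close> in auto)
  also have "\<dots> = (\<integral>\<^sup>+s. ?g s * indicator {t 0..<t (Suc n)} s \<partial>lborel)"
    by (rule nn_integral_cong) (use \<open>t 0 \<le> t n\<close> \<open>t n < t (Suc n)\<close> in \<open>auto split: split_indicator\<close>)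
  finally show ?case .
qed simp

section \<open>Total variation controls every \<open>\<rho>\<close>-variation\<close>

lemma powr_sum_powr_le_sum:
  fixes a :: "nat \<Rightarrow> real"
  assumes fin: "finite I" and nonneg: "\<And>i. i \<in> I \<Longrightarrow> a i \<ge> 0" and "\<rho> \<ge> 1"
  shows "(\<Sum>i\<in>I. a i powr \<rho>) powr (1/\<rho>) \<le> (\<Sum>i\<in>I. a i)"
proof -
  define S where "S = (\<Sum>i\<in>I. a i)"
  have "S \<ge> 0" unfolding S_def using nonneg by (simp add: sum_nonneg)
  show ?thesis
  proof (cases "S = 0")
    case True
    then have "\<forall>i\<in>I. a i = 0" using sum_nonneg_eq_0_iff[OF fin] nonneg unfolding S_def by blast
    then show ?thesis using True by (simp add: S_def)
  next
    case False
    with \<open>S \<ge> 0\<close> have "S > 0" by simp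
    have term_le: "a i powr \<rho> \<le> a i * S powr (\<rho> - 1)" if "i \<in> I" for i
    proof (cases "a i = 0")
      case False
      then have "a i > 0" using nonneg[OF that] by simp
      have "a i \<le> S" unfolding S_def using fin nonneg that by (intro member_le_sum) auto
      have "a i powr \<rho> = a i * a i powr (\<rho> - 1)"
        using powr_add[of "a i" 1 "\<rho> - 1"] \<open>a i > 0\<close> by simp
      also have "\<dots> \<le> a i * S powr (\<rho> - 1)"
        using \<open>a i > 0\<close> \<open>a i \<le> S\<close> \<open>\<rho> \<ge> 1\<close> by (auto intro!: mult_left_mono powr_mono2)
      finally show ?thesis .
    qed simp
    have "(\<Sum>i\<in>I. a i powr \<rho>) \<le> (\<Sum>i\<in>I. a i * S powr (\<rho> - 1))" by (rule sum_mono) (rule term_le)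
    also have "\<dots> = S * S powr (\<rho> - 1)" unfolding S_def by (simp add: sum_distrib_right)
    also have "\<dots> = S powr \<rho>" using powr_add[of S 1 "\<rho> - 1"] \<open>S > 0\<close> by simp
    finally have "(\<Sum>i\<in>I. a i powr \<rho>) powr (1/\<rho>) \<le> (S powr \<rho>) powr (1/\<rho>)"
      using \<open>\<rho> \<ge> 1\<close> by (intro powr_mono2) (auto intro: sum_nonneg)
    also have "\<dots> = S" using \<open>\<rho> \<ge> 1\<close> \<open>S > 0\<close> by (simp add: powr_powr)
    finally show ?thesis by (simp add: S_def)
  qed
qed

lemma var_norm_le_if_variation_sums_le:
  assumes "\<rho> \<ge> 1"
    and "\<And>n t. \<forall>i\<le>n. t i \<in> I \<Longrightarrow> \<forall>i<n. t i < t (Suc i) \<Longrightarrow> (\<Sum>i=1..n. \<bar>\<phi> (t i) - \<phi> (t (i-1))\<bar>) \<le> B"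
  shows "var_norm \<rho> I \<phi> \<le> ereal B"
  unfolding var_norm_def
proof (rule SUP_least, safe)
  fix n and t :: "nat \<Rightarrow> real"
  assume "\<forall>i\<le>n. t i \<in> I" "\<forall>i<n. t i < t (Suc i)"
  have "(\<Sum>i=1..n. \<bar>\<phi> (t i) - \<phi> (t (i-1))\<bar> powr \<rho>) powr (1/\<rho>) \<le> (\<Sum>i=1..n. \<bar>\<phi> (t i) - \<phi> (t (i-1))\<bar>)"
    by (rule powr_sum_powr_le_sum) (use assms(1) in auto)
  also have "\<dots> \<le> B" using assms(2) \<open>\<forall>i\<le>n. t i \<in> I\<close> \<open>\<forall>i<n. t i < t (Suc i)\<close> .
  finally show "ereal ((\<Sum>i=1..fst (n, t). \<bar>\<phi> (snd (n, t) i) - \<phi> (snd (n, t) (i - 1))\<bar> powr \<rho>) powr (1 / \<rho>)) \<le> ereal B"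
    by simp
qed

section \<open>The factors of the Mehler kernel\<close>

definition ou_var :: "real \<Rightarrow> real" where "ou_var t = 1 - exp (-2*t)"
definition ou_amp :: "real \<Rightarrow> real" where "ou_amp t = 1 / sqrt (ou_var t)"
definition ou_amp' :: "real \<Rightarrow> real" where "ou_amp' t = - exp (-2*t) / (ou_var t * sqrt (ou_var t))"
definition ou_gauss :: "real \<Rightarrow> real \<Rightarrow> real \<Rightarrow> real" where
  "ou_gauss x u t = exp (- (1/2) * (exp (-t) * u - x)\<^sup>2 / ou_var t)"
definition ou_gauss' :: "real \<Rightarrow> real \<Rightarrow> real \<Rightarrow> real" where
  "ou_gauss' x u t = ou_gauss x u t * (exp (-t) / (ou_var t)\<^sup>2) * ((exp (-t) * u - x) * (u - exp (-t) * x))"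

lemma K_eq_ou_factors: "K t x u = exp (R x) * ou_amp t * ou_gauss x u t"
  unfolding K_def ou_amp_def ou_gauss_def ou_var_def by simp

lemma ou_var_pos: "t > 0 \<Longrightarrow> ou_var t > 0"
  by (simp add: ou_var_def)

lemma ou_var_ge: "t \<ge> 1 \<Longrightarrow> ou_var t \<ge> 1/4"
proof -
  assume "t \<ge> 1"
  have "exp (2::real) \<ge> 4/3" using exp_ge_add_one_self[of 2] by simp
  have "exp (-2*t) \<le> exp (-2)" using \<open>t \<ge> 1\<close> by simp
  also have "\<dots> \<le> 3/4" using \<open>exp 2 \<ge> 4/3\<close> by (simp add: exp_minus field_simps)
  finally show ?thesis unfolding ou_var_def by simp
qed

lemma ou_var_has_derivative: "(ou_var has_real_derivative 2 * exp (-2*t)) (at t)"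
  unfolding ou_var_def by (rule derivative_eq_intros | simp)+

lemma ou_amp_has_derivative:
  assumes "t > 0" shows "(ou_amp has_real_derivative ou_amp' t) (at t)"
proof -
  have pos: "ou_var t > 0" using ou_var_pos assms by simp
  have "DERIV (\<lambda>t. sqrt (ou_var t)) t :> inverse (sqrt (ou_var t)) / 2 * (2 * exp (-2*t))"
    by (rule DERIV_chain2[OF DERIV_real_sqrt[OF pos] ou_var_has_derivative])
  then have "DERIV (\<lambda>t. inverse (sqrt (ou_var t))) t
      :> - ((inverse (sqrt (ou_var t)) / 2 * (2 * exp (-2*t))) * inverse (sqrt (ou_var t) ^ Suc (Suc 0)))"
    by (rule DERIV_inverse_fun) (use pos in simp)
  moreover have "- ((inverse (sqrt (ou_var t)) / 2 * (2 * exp (-2*t))) * inverse (sqrt (ou_var t) ^ Suc (Suc 0))) = ou_amp' t"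
    using pos unfolding ou_amp'_def by (simp add: field_simps)
  ultimately show ?thesis unfolding ou_amp_def[abs_def] by (simp add: inverse_eq_divide)
qed

lemma ou_gauss_has_derivative:
  assumes "t > 0" shows "(ou_gauss x u has_real_derivative ou_gauss' x u t) (at t)"
proof -
  define N where "N t = - (1/2) * (exp (-t) * u - x)\<^sup>2" for t
  define N' where "N' = - (1/2) * (2 * (exp (-t) * u - x) * (- exp (-t) * u))"
  have pos: "ou_var t > 0" using ou_var_pos assms by simp
  have "DERIV N t :> N'" unfolding N_def N'_def by (auto intro!: derivative_eq_intros)
  then have "DERIV (\<lambda>t. N t / ou_var t) t :> (N' * ou_var t - N t * (2 * exp (-2*t))) / (ou_var t * ou_var t)"
    by (rule DERIV_divide[OF _ ou_var_has_derivative]) (use pos in simp)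
  then have "DERIV (ou_gauss x u) t :> ou_gauss x u t * ((N' * ou_var t - N t * (2 * exp (-2*t))) / (ou_var t * ou_var t))"
    unfolding ou_gauss_def[abs_def] N_def[symmetric] by (rule DERIV_fun_exp)
  moreover have "N' * ou_var t - N t * (2 * exp (-2*t)) = exp (-t) * ((exp (-t) * u - x) * (u - exp (-t) * x))"
    unfolding N_def N'_def ou_var_def exp_add[symmetric] mult_2[of "-t", symmetric]
    by (simp add: algebra_simps power2_eq_square flip: exp_add)
  ultimately show ?thesis unfolding ou_gauss'_def by (simp add: power2_eq_square mult.assoc)
qed

lemma ou_amp_bounds: "t \<ge> 1 \<Longrightarrow> 0 \<le> ou_amp t \<and> ou_amp t \<le> 2"
proof -
  assume "t \<ge> 1"
  have "sqrt (1/4) \<le> sqrt (ou_var t)" using ou_var_ge[OF \<open>t \<ge> 1\<close>] by (simp only: real_sqrt_le_iff)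
  moreover have "sqrt (1/4::real) = 1/2" by (simp add: real_sqrt_divide)
  ultimately show ?thesis using ou_var_ge[OF \<open>t \<ge> 1\<close>] unfolding ou_amp_def by (auto simp: divide_le_eq)
qed

lemma ou_amp'_nonpos: "t \<ge> 1 \<Longrightarrow> ou_amp' t \<le> 0"
  using ou_var_ge[of t] unfolding ou_amp'_def by (simp add: divide_nonpos_pos)

lemma ou_gauss_bounds: "t \<ge> 1 \<Longrightarrow> 0 < ou_gauss x u t \<and> ou_gauss x u t \<le> 1"
  using ou_var_ge[of t] unfolding ou_gauss_def by (simp add: divide_nonpos_pos)

lemma continuous_on_ou_var: "continuous_on S ou_var"
  unfolding ou_var_def by (intro continuous_intros)

lemma ou_var_nonzero: "t \<ge> 1 \<Longrightarrow> ou_var t \<noteq> 0"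
  using ou_var_ge[of t] by auto

lemma continuous_on_ou_factors:
  "continuous_on {1..} ou_amp" "continuous_on {1..} ou_amp'"
  "continuous_on {1..} (ou_gauss x u)" "continuous_on {1..} (ou_gauss' x u)"
  unfolding ou_amp_def ou_amp'_def ou_gauss'_def ou_gauss_def
  by (auto intro!: continuous_intros continuous_on_ou_var simp: ou_var_nonzero)

lemma ou_gauss'_piecewise_constant_sign:
  "\<exists>m1 m2. m1 \<le> m2 \<and> constant_sign_on {..m1} (ou_gauss' x u) \<and>
     constant_sign_on {m1..m2} (ou_gauss' x u) \<and> constant_sign_on {m2..} (ou_gauss' x u)"
proof -
  obtain mA where A: "constant_sign_on {..mA} (\<lambda>t. u * exp (-t) + (-x))" "constant_sign_on {mA..} (\<lambda>t. u * exp (-t) + (-x))"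
    using constant_sign_on_affine_exp_split by blast
  obtain mB where B: "constant_sign_on {..mB} (\<lambda>t. (-x) * exp (-t) + u)" "constant_sign_on {mB..} (\<lambda>t. (-x) * exp (-t) + u)"
    using constant_sign_on_affine_exp_split by blast
  have "ou_gauss' x u = (\<lambda>t. (ou_gauss x u t * (exp (-t) / (ou_var t)\<^sup>2)) * ((u * exp (-t) + (-x)) * ((-x) * exp (-t) + u)))"
    unfolding ou_gauss'_def by (auto simp: algebra_simps)
  then have both: "constant_sign_on S (ou_gauss' x u)"
    if "constant_sign_on S (\<lambda>t. u * exp (-t) + (-x))" "constant_sign_on S (\<lambda>t. (-x) * exp (-t) + u)" for S
    using that by (simp only:) (intro constant_sign_on_nonneg_mult constant_sign_on_mult, auto simp: ou_gauss_def)
  have on_subsets: "constant_sign_on S (ou_gauss' x u)"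
    if "S \<subseteq> {..mA} \<or> S \<subseteq> {mA..}" "S \<subseteq> {..mB} \<or> S \<subseteq> {mB..}" for S
    using that A B by (intro both) (blast intro: constant_sign_on_subset)+
  show ?thesis
    by (rule exI[of _ "min mA mB"], rule exI[of _ "max mA mB"]) (auto intro!: on_subsets)
qed

lemma nn_integral_abs_ou_amp'_le: "(\<integral>\<^sup>+t. ennreal \<bar>ou_amp' t\<bar> * indicator {1..} t \<partial>lborel) \<le> 2"
proof (rule nn_integral_Ici_le_if_truncations_le[OF continuous_on_ou_factors(2)])
  fix T :: real assume "T \<ge> 1"
  have "(\<integral>\<^sup>+t. ennreal \<bar>ou_amp' t\<bar> * indicator {1..T} t \<partial>lborel) = ennreal \<bar>ou_amp T - ou_amp 1\<bar>"
    by (rule nn_integral_abs_deriv_constant_sign[OF \<open>T \<ge> 1\<close>])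
      (use ou_amp_has_derivative ou_amp'_nonpos in \<open>auto simp: constant_sign_on_def\<close>)
  also have "\<dots> \<le> ennreal 2" using ou_amp_bounds[of T] ou_amp_bounds[of 1] \<open>T \<ge> 1\<close>
    by (intro ennreal_leI) auto
  finally show "(\<integral>\<^sup>+t. ennreal \<bar>ou_amp' t\<bar> * indicator {1..T} t \<partial>lborel) \<le> 2" by simp
qed

lemma nn_integral_abs_ou_gauss'_piece_le:
  assumes "1 \<le> lo" "constant_sign_on {lo..hi} (ou_gauss' x u)"
  shows "(\<integral>\<^sup>+t. ennreal \<bar>ou_gauss' x u t\<bar> * indicator {lo..hi} t \<partial>lborel) \<le> 1"
proof (cases "lo \<le> hi")
  case True
  have "(\<integral>\<^sup>+t. ennreal \<bar>ou_gauss' x u t\<bar> * indicator {lo..hi} t \<partial>lborel) = ennreal \<bar>ou_gauss x u hi - ou_gauss x u lo\<bar>"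
    by (rule nn_integral_abs_deriv_constant_sign[OF True _ assms(2)]) (use ou_gauss_has_derivative assms(1) in auto)
  also have "\<dots> \<le> ennreal 1" using ou_gauss_bounds[of hi x u] ou_gauss_bounds[of lo x u] assms(1) True
    by (intro ennreal_leI) auto
  finally show ?thesis by simp
qed simp

lemma nn_integral_abs_ou_gauss'_le: "(\<integral>\<^sup>+t. ennreal \<bar>ou_gauss' x u t\<bar> * indicator {1..} t \<partial>lborel) \<le> 3"
proof (rule nn_integral_Ici_le_if_truncations_le[OF continuous_on_ou_factors(4)])
  fix T :: real assume "T \<ge> 1"
  obtain m1 m2 where m: "m1 \<le> m2" "constant_sign_on {..m1} (ou_gauss' x u)"
    "constant_sign_on {m1..m2} (ou_gauss' x u)" "constant_sign_on {m2..} (ou_gauss' x u)"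
    using ou_gauss'_piecewise_constant_sign by blast
  let ?g = "\<lambda>t. ennreal \<bar>ou_gauss' x u t\<bar>"
  have "?g \<in> borel_measurable lborel"
    by (intro measurable_compose[OF _ measurable_ennreal] borel_measurable_abs)
      (simp add: ou_gauss'_def ou_gauss_def ou_var_def)
  have "(\<integral>\<^sup>+t. ?g t * indicator {1..T} t \<partial>lborel)
      \<le> (\<integral>\<^sup>+t. ?g t * indicator {1..min T m1} t + (?g t * indicator {max 1 m1..min T m2} t + ?g t * indicator {max 1 m2..T} t) \<partial>lborel)"
    by (rule nn_integral_mono) (use m(1) in \<open>auto split: split_indicator\<close>)
  also have "\<dots> = (\<integral>\<^sup>+t. ?g t * indicator {1..min T m1} t \<partial>lborel)
      + ((\<integral>\<^sup>+t. ?g t * indicator {max 1 m1..min T m2} t \<partial>lborel) + (\<integral>\<^sup>+t. ?g t * indicator {max 1 m2..T} t \<partial>lborel))"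
    using \<open>?g \<in> borel_measurable lborel\<close> by (simp add: nn_integral_add)
  also have "\<dots> \<le> 1 + (1 + 1)"
    by (intro add_mono nn_integral_abs_ou_gauss'_piece_le constant_sign_on_subset[OF m(2)]
        constant_sign_on_subset[OF m(3)] constant_sign_on_subset[OF m(4)]) auto
  finally show "(\<integral>\<^sup>+t. ?g t * indicator {1..T} t \<partial>lborel) \<le> 3" by simp
qed

section \<open>The time derivative of the kernel\<close>

lemma K_has_derivative:
  assumes "t > 0"
  shows "((\<lambda>s. K s x u) has_real_derivative exp (R x) * (ou_amp' t * ou_gauss x u t + ou_amp t * ou_gauss' x u t)) (at t)"
  unfolding K_eq_ou_factors mult.assoc
  by (auto intro!: derivative_eq_intros ou_amp_has_derivative[OF assms] ou_gauss_has_derivative[OF assms]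
      simp: algebra_simps)

lemma Kdot_eq: "t > 0 \<Longrightarrow> Kdot t x u = exp (R x) * (ou_amp' t * ou_gauss x u t + ou_amp t * ou_gauss' x u t)"
  unfolding Kdot_def by (rule DERIV_imp_deriv[OF K_has_derivative])

lemma K_has_derivative_Kdot: "t > 0 \<Longrightarrow> ((\<lambda>s. K s x u) has_real_derivative Kdot t x u) (at t)"
  using K_has_derivative[of t x u] Kdot_eq[of t x u] by simp

lemma continuous_on_Kdot: "continuous_on {1..} (\<lambda>t. Kdot t x u)"
proof -
  have "continuous_on {1..} (\<lambda>t. exp (R x) * (ou_amp' t * ou_gauss x u t + ou_amp t * ou_gauss' x u t))"
    by (intro continuous_intros continuous_on_ou_factors)
  then show ?thesis by (rule continuous_on_cong[THEN iffD1, rotated 2]) (auto simp: Kdot_eq)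
qed

lemma abs_Kdot_le:
  assumes "t \<ge> 1"
  shows "\<bar>Kdot t x u\<bar> \<le> exp (R x) * (\<bar>ou_amp' t\<bar> + 2 * \<bar>ou_gauss' x u t\<bar>)"
proof -
  have a: "0 \<le> ou_amp t" "ou_amp t \<le> 2" and b: "0 < ou_gauss x u t" "ou_gauss x u t \<le> 1"
    using ou_amp_bounds[OF assms] ou_gauss_bounds[OF assms] by auto
  have "\<bar>ou_amp' t * ou_gauss x u t + ou_amp t * ou_gauss' x u t\<bar>
      \<le> \<bar>ou_amp' t\<bar> * ou_gauss x u t + ou_amp t * \<bar>ou_gauss' x u t\<bar>"
    using a b by (simp add: abs_mult abs_triangle_ineq[THEN order_trans])
  also have "\<dots> \<le> \<bar>ou_amp' t\<bar> * 1 + 2 * \<bar>ou_gauss' x u t\<bar>"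
    using a b by (intro add_mono mult_mono) auto
  finally show ?thesis using assms by (simp add: Kdot_eq abs_mult)
qed

lemma nn_integral_abs_Kdot_le:
  "(\<integral>\<^sup>+ t. ennreal \<bar>Kdot t x u\<bar> * indicator {1..} t \<partial>lborel) \<le> ennreal (8 * exp (R x))"
proof -
  let ?A = "\<lambda>t. ennreal \<bar>ou_amp' t\<bar> * indicator {1..} t"
  let ?B = "\<lambda>t. ennreal \<bar>ou_gauss' x u t\<bar> * indicator {1..} t"
  have pointwise: "ennreal \<bar>Kdot t x u\<bar> * indicator {1..} t \<le> ennreal (exp (R x)) * (?A t + 2 * ?B t)" for t
  proof (cases "t \<ge> 1")
    case True
    have "ennreal \<bar>Kdot t x u\<bar> \<le> ennreal (exp (R x) * (\<bar>ou_amp' t\<bar> + 2 * \<bar>ou_gauss' x u t\<bar>))"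
      by (rule ennreal_leI[OF abs_Kdot_le[OF True]])
    then show ?thesis using True by (simp add: ennreal_mult ennreal_plus)
  qed simp
  have "(\<integral>\<^sup>+ t. ennreal \<bar>Kdot t x u\<bar> * indicator {1..} t \<partial>lborel)
      \<le> (\<integral>\<^sup>+ t. ennreal (exp (R x)) * (?A t + 2 * ?B t) \<partial>lborel)"
    by (rule nn_integral_mono) (rule pointwise)
  also have "\<dots> = ennreal (exp (R x)) * ((\<integral>\<^sup>+ t. ?A t \<partial>lborel) + 2 * (\<integral>\<^sup>+ t. ?B t \<partial>lborel))"
    using borel_measurable_abs_indicator_Ici[OF continuous_on_ou_factors(2)]
      borel_measurable_abs_indicator_Ici[OF continuous_on_ou_factors(4)]
    by (simp add: nn_integral_cmult nn_integral_add)
  also have "\<dots> \<le> ennreal (exp (R x)) * (2 + 2 * 3)"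
    by (intro mult_left_mono add_mono nn_integral_abs_ou_amp'_le nn_integral_abs_ou_gauss'_le) auto
  also have "\<dots> = ennreal (8 * exp (R x))"
    by (simp add: ennreal_mult mult.commute)
  finally show ?thesis .
qed

lemma K_variation_sum_le:
  assumes "\<forall>i\<le>n. t i \<ge> 1" and "\<forall>i<n. t i < t (Suc i)"
  shows "(\<Sum>i=1..n. \<bar>K (t i) x u - K (t (i-1)) x u\<bar>) \<le> 8 * exp (R x)"
proof -
  have "ennreal (\<Sum>i=1..n. \<bar>K (t i) x u - K (t (i-1)) x u\<bar>)
      \<le> (\<integral>\<^sup>+s. ennreal \<bar>Kdot s x u\<bar> * indicator {t 0..<t n} s \<partial>lborel)"
    by (rule variation_sum_le_nn_integral_abs_deriv[OF K_has_derivative_Kdot continuous_on_Kdot assms]) simp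
  also have "\<dots> \<le> (\<integral>\<^sup>+s. ennreal \<bar>Kdot s x u\<bar> * indicator {1..} s \<partial>lborel)"
    using assms(1) by (intro nn_integral_mono) (auto split: split_indicator)
  also have "\<dots> \<le> ennreal (8 * exp (R x))" by (rule nn_integral_abs_Kdot_le)
  finally show ?thesis by (simp add: ennreal_le_iff)
qed

section \<open>Variation of the Ornstein--Uhlenbeck semigroup\<close>

lemma K_bounds: "s \<ge> 1 \<Longrightarrow> 0 \<le> K s x u \<and> K s x u \<le> 2 * exp (R x)"
proof -
  assume "s \<ge> 1"
  have a: "0 \<le> ou_amp s" "ou_amp s \<le> 2" and b: "0 \<le> ou_gauss x u s" "ou_gauss x u s \<le> 1"
    using ou_amp_bounds[OF \<open>s \<ge> 1\<close>] ou_gauss_bounds[OF \<open>s \<ge> 1\<close>, of x u] by auto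
  have "ou_amp s * ou_gauss x u s \<le> 2 * 1" using a b by (intro mult_mono) auto
  then show ?thesis using a b unfolding K_eq_ou_factors mult.assoc by (simp add: mult.commute)
qed

lemma integrable_mult_K:
  assumes f: "integrable gamma_inf f" and "s \<ge> 1"
  shows "integrable gamma_inf (\<lambda>u. f u * K s x u)"
proof (rule Bochner_Integration.integrable_bound)
  show "integrable gamma_inf (\<lambda>u. (2 * exp (R x)) * \<bar>f u\<bar>)"
    using f by (intro integrable_mult_right integrable_abs)
  have "(\<lambda>u. K s x u) \<in> borel_measurable gamma_inf"
    unfolding gamma_inf_def K_def by measurable
  then show "(\<lambda>u. f u * K s x u) \<in> borel_measurable gamma_inf"
    using f by (intro borel_measurable_times) (auto dest: borel_measurable_integrable)
  show "AE u in gamma_inf. norm (f u * K s x u) \<le> norm (2 * exp (R x) * \<bar>f u\<bar>)"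
  proof (rule AE_I2)
    fix u
    have "0 \<le> K s x u" "K s x u \<le> 2 * exp (R x)" using K_bounds[OF \<open>s \<ge> 1\<close>, of x u] by auto
    then show "norm (f u * K s x u) \<le> norm (2 * exp (R x) * \<bar>f u\<bar>)"
      by (simp add: abs_mult mult.commute mult_left_mono)
  qed
qed

lemma abs_H_diff_le:
  assumes f: "integrable gamma_inf f" and "a \<ge> 1" "b \<ge> 1"
  shows "\<bar>H a f x - H b f x\<bar> \<le> (\<integral>u. \<bar>f u\<bar> * \<bar>K a x u - K b x u\<bar> \<partial>gamma_inf)"
    and "integrable gamma_inf (\<lambda>u. \<bar>f u\<bar> * \<bar>K a x u - K b x u\<bar>)"
proof -
  have ia: "integrable gamma_inf (\<lambda>u. f u * K a x u)" by (rule integrable_mult_K[OF f \<open>a \<ge> 1\<close>])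
  have ib: "integrable gamma_inf (\<lambda>u. f u * K b x u)" by (rule integrable_mult_K[OF f \<open>b \<ge> 1\<close>])
  have eq: "(\<lambda>u. \<bar>f u * K a x u - f u * K b x u\<bar>) = (\<lambda>u. \<bar>f u\<bar> * \<bar>K a x u - K b x u\<bar>)"
    by (auto simp: abs_mult right_diff_distrib[symmetric])
  have "integrable gamma_inf (\<lambda>u. \<bar>f u * K a x u - f u * K b x u\<bar>)"
    by (intro integrable_abs Bochner_Integration.integrable_diff ia ib)
  then show "integrable gamma_inf (\<lambda>u. \<bar>f u\<bar> * \<bar>K a x u - K b x u\<bar>)" by (simp only: eq)
  have "H a f x - H b f x = (\<integral>u. f u * K a x u - f u * K b x u \<partial>gamma_inf)"
    unfolding H_def by (rule Bochner_Integration.integral_diff[OF ia ib, symmetric])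
  also have "\<bar>\<dots>\<bar> \<le> (\<integral>u. \<bar>f u\<bar> * \<bar>K a x u - K b x u\<bar> \<partial>gamma_inf)"
    using integral_norm_bound[of gamma_inf "\<lambda>u. f u * K a x u - f u * K b x u"] by (simp only: real_norm_def eq)
  finally show "\<bar>H a f x - H b f x\<bar> \<le> (\<integral>u. \<bar>f u\<bar> * \<bar>K a x u - K b x u\<bar> \<partial>gamma_inf)" .
qed

lemma H_variation_sum_le:
  assumes f: "integrable gamma_inf f" and f_norm: "(\<integral>u. \<bar>f u\<bar> \<partial>gamma_inf) = 1"
    and t: "\<forall>i\<le>n. t i \<ge> 1" "\<forall>i<n. t i < t (Suc i)"
  shows "(\<Sum>i=1..n. \<bar>H (t i) f x - H (t (i-1)) f x\<bar>) \<le> 8 * exp (R x)"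
proof -
  let ?D = "\<lambda>i u. \<bar>f u\<bar> * \<bar>K (t i) x u - K (t (i-1)) x u\<bar>"
  have t_ge: "t i \<ge> 1" "t (i-1) \<ge> 1" if "i \<in> {1..n}" for i using t(1) that by auto
  have "(\<Sum>i=1..n. \<bar>H (t i) f x - H (t (i-1)) f x\<bar>) \<le> (\<Sum>i=1..n. (\<integral>u. ?D i u \<partial>gamma_inf))"
    by (rule sum_mono) (use abs_H_diff_le(1)[OF f] t_ge in auto)
  also have "\<dots> = (\<integral>u. (\<Sum>i=1..n. ?D i u) \<partial>gamma_inf)"
    by (rule Bochner_Integration.integral_sum[symmetric]) (use abs_H_diff_le(2)[OF f] t_ge in auto)
  also have "\<dots> \<le> (\<integral>u. \<bar>f u\<bar> * (8 * exp (R x)) \<partial>gamma_inf)"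
  proof (rule integral_mono)
    show "integrable gamma_inf (\<lambda>u. \<Sum>i=1..n. ?D i u)"
      by (rule Bochner_Integration.integrable_sum) (use abs_H_diff_le(2)[OF f] t_ge in auto)
    show "integrable gamma_inf (\<lambda>u. \<bar>f u\<bar> * (8 * exp (R x)))"
      using f by (intro integrable_mult_left integrable_abs)
    fix u
    show "(\<Sum>i=1..n. ?D i u) \<le> \<bar>f u\<bar> * (8 * exp (R x))"
      unfolding sum_distrib_left[symmetric] by (intro mult_left_mono K_variation_sum_le t) auto
  qed
  also have "\<dots> = 8 * exp (R x)" using f_norm by simp
  finally show ?thesis .
qed

theorem mainTheorem5:
  shows "\<exists>C::real.
    (\<forall>x u. (\<integral>\<^sup>+ t. ennreal \<bar>Kdot t x u\<bar> * indicator {1..} t \<partial>lborel)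
              \<le> ennreal (C * exp (R x))) \<and>
    (\<forall>\<rho> f x. 1 \<le> \<rho> \<longrightarrow> integrable gamma_inf f \<longrightarrow> (\<integral>u. \<bar>f u\<bar> \<partial>gamma_inf) = 1 \<longrightarrow>
        var_norm \<rho> {1..} (\<lambda>t. H t f x) \<le> ereal (C * exp (R x)))"
proof (intro exI[of _ 8] conjI allI impI)
  fix x u
  show "(\<integral>\<^sup>+ t. ennreal \<bar>Kdot t x u\<bar> * indicator {1..} t \<partial>lborel) \<le> ennreal (8 * exp (R x))"
    by (rule nn_integral_abs_Kdot_le)
next
  fix \<rho> :: real and f :: "real \<Rightarrow> real" and x :: real
  assume "1 \<le> \<rho>" "integrable gamma_inf f" "(\<integral>u. \<bar>f u\<bar> \<partial>gamma_inf) = 1"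
  then show "var_norm \<rho> {1..} (\<lambda>t. H t f x) \<le> ereal (8 * exp (R x))"
    by (intro var_norm_le_if_variation_sums_le H_variation_sum_le) auto
qed

end
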